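(* Let $W\subseteq T^*Q$ be a subbundle, $\mathfrak H$ a quadratic form on $T^*Q$, $h,\hat h:Q\to\mathbb R$ smooth functions, $\hat W$ a complement of $W$ with projections $\hat{\mathfrak p}:T^*Q\to\hat W$, $\mathfrak p:T^*Q\to W$, and $\mathfrak K$, $\mathfrak L$ quadratic forms on $\hat W$ and $W$ respectively. Put $\hat{\mathfrak H}=\mathfrak K\circ\hat{\mathfrak p}+\mathfrak L\circ\mathfrak p$. Then $\mathbb F(\mathfrak L\circ\mathfrak p)(\sigma)=0$ for all $\sigma\in\hat W$, and the potential equation $$\big(\mathrm d\hat h\circ\mathbb F\mathfrak H-\mathrm dh\circ\mathbb F\hat{\mathfrak H}\big)\circ(\mathbb F\hat{\mathfrak H})^{-1}(\mathsf v)=0\quad\forall\,\mathsf v\in W^\circ$$ holds if and only if $$\big(\mathrm d\hat h\circ\mathbb F\mathfrak H-\mathrm dh\circ\mathbb F(\mathfrak K\circ\hat{\mathfrak p})\big)(\sigma)=0\quad\forall\,\sigma\in\hat W.$$ In particular the potential equation does not depend on $\mathfrak L$.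
   Context: $Q$ is a smooth connected manifold of dimension $n$, $\pi:T^*Q\to Q$ its cotangent bundle, $\langle\cdot,\cdot\rangle$ the pairing between $T_q^*Q$ and $T_qQ$. For a smooth vector subbundle $V\subseteq T^*Q$, a quadratic form on $V$ is a function $\mathfrak F(\alpha)=\tfrac12\langle\alpha,\rho^\sharp(\alpha)\rangle$ with $\rho$ a smooth fibered positive-definite inner product on $V^*$, $\rho^\flat:V^*\to V$ given by $\langle\rho^\flat(u),v\rangle=\rho(u,v)$, $\rho^\sharp=(\rho^\flat)^{-1}$. A complement of $W$ is a smooth subbundle $\hat W$ with $T^*Q=\hat W\oplus W$. $W^\circ\subseteq TQ$ is the annihilator of $W$. The fiber derivative of a smooth $f:T^*Q\to\mathbb R$ is $\mathbb Ff:T^*Q\to TQ$ with $\langle\beta,\mathbb Ff(\alpha)\rangle=\frac{d}{dt}f(\alpha+t\beta)|_{t=0}$ ($\alpha,\beta\in T_q^*Q$); for a quadratic form $\mathfrak F$ on $T^*Q$, $\mathbb F\mathfrak F=\rho^\sharp$ is a bundle isomorphism. For a smooth function $g$ on $Q$ and a fiber-preserving map $F:T^*Q\to TQ$, $\mathrm dg\circ F$ denotes $\alpha\mapsto\langle \mathrm dg(\pi(\alpha)),F(\alpha)\rangle$. *)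

theory Defs
  imports "HOL-Analysis.Analysis"
begin

text \<open>Points of Q form an arbitrary type 'q. Each cotangent fiber
T_q^*Q and each tangent fiber T_qQ is identified with real^'n (n = dim Q = CARD('n)),
and the pairing between them is the inner product. A (sub)bundle is a map
q \<mapsto> subspace of the fiber; functions on T^*Q are functions 'q => real^'n => real.\<close>

definition pairing :: "real^'n \<Rightarrow> real^'n \<Rightarrow> real" where
  "pairing \<alpha> v = \<alpha> \<bullet> v"

definition subbundle :: "('q \<Rightarrow> (real^'n) set) \<Rightarrow> bool" where
  "subbundle V \<longleftrightarrow> (\<forall>q. subspace (V q)) \<and> (\<forall>q q'. dim (V q) = dim (V q'))"

definition is_complement :: "('q \<Rightarrow> (real^'n) set) \<Rightarrow> ('q \<Rightarrow> (real^'n) set) \<Rightarrow> bool" where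
  "is_complement Wh W \<longleftrightarrow> subbundle Wh \<and>
     (\<forall>q. Wh q \<inter> W q = {0} \<and> (\<forall>\<alpha>. \<exists>\<sigma>\<in>Wh q. \<exists>\<omega>\<in>W q. \<alpha> = \<sigma> + \<omega>))"

definition proj_along :: "('q \<Rightarrow> (real^'n) set) \<Rightarrow> ('q \<Rightarrow> (real^'n) set) \<Rightarrow> 'q \<Rightarrow> real^'n \<Rightarrow> real^'n" where
  "proj_along A B q \<alpha> = (THE \<sigma>. \<sigma> \<in> A q \<and> \<alpha> - \<sigma> \<in> B q)"

definition annihilator :: "(real^'n) set \<Rightarrow> (real^'n) set" where
  "annihilator V = {v. \<forall>\<alpha>\<in>V. pairing \<alpha> v = 0}"

text \<open>Quadratic form on the subbundle V: F(\<alpha>) = 1/2 <\<alpha>, \<rho>#(\<alpha>)>, where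
(\<alpha>,\<beta>) \<mapsto> <\<alpha>, \<rho>#(\<beta>)> is a fiberwise symmetric positive definite bilinear form on V
(this is exactly what a positive definite inner product \<rho> on V^* induces).\<close>
definition quadratic_form_on :: "('q \<Rightarrow> (real^'n) set) \<Rightarrow> ('q \<Rightarrow> real^'n \<Rightarrow> real) \<Rightarrow> bool" where
  "quadratic_form_on V F \<longleftrightarrow> (\<exists>B :: 'q \<Rightarrow> real^'n \<Rightarrow> real^'n \<Rightarrow> real.
     \<forall>q. bilinear (B q) \<and>
         (\<forall>\<alpha>\<in>V q. \<forall>\<beta>\<in>V q. B q \<alpha> \<beta> = B q \<beta> \<alpha>) \<and>
         (\<forall>\<alpha>\<in>V q. \<alpha> \<noteq> 0 \<longrightarrow> B q \<alpha> \<alpha> > 0) \<and>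
         (\<forall>\<alpha>\<in>V q. F q \<alpha> = B q \<alpha> \<alpha> / 2))"

definition fiber_deriv :: "('q \<Rightarrow> real^'n \<Rightarrow> real) \<Rightarrow> 'q \<Rightarrow> real^'n \<Rightarrow> real^'n" where
  "fiber_deriv f q \<alpha> = (THE u. \<forall>\<beta>. ((\<lambda>t. f q (\<alpha> + t *\<^sub>R \<beta>)) has_real_derivative pairing \<beta> u) (at 0))"

end

theory Submission
  imports Defs
begin

text \<open>On each fiber, \<open>\<hat>\<HH> = \<KK> \<circ> \<hat>\<pp> + \<LL> \<circ> \<pp>\<close> is the quadratic form of the symmetric bilinear
form \<open>C(x, y) = b\<^sub>K(\<hat>\<pp> x, \<hat>\<pp> y) + b\<^sub>L(\<pp> x, \<pp> y)\<close>, which is positive definite because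
\<open>b\<^sub>K\<close>, \<open>b\<^sub>L\<close> are positive definite on the two summands; so its fiber derivative \<open>G\<close>,
characterised by \<open>\<langle>\<beta>, G \<alpha>\<rangle> = C(\<alpha>, \<beta>)\<close>, is a linear isomorphism. The \<open>\<LL>\<close>-part of \<open>C\<close> vanishes
as soon as one argument lies in \<open>\<hat>W\<close>, so on \<open>\<hat>W\<close> the map \<open>G\<close> agrees with the fiber
derivative of \<open>\<KK> \<circ> \<hat>\<pp>\<close> and the fiber derivative of \<open>\<LL> \<circ> \<pp>\<close> vanishes. Moreover \<open>G \<alpha>\<close>
annihilates \<open>W\<close> exactly when \<open>\<alpha> \<in> \<hat>W\<close>: testing against \<open>\<pp> \<alpha>\<close> gives \<open>b\<^sub>L(\<pp> \<alpha>, \<pp> \<alpha>) = 0\<close>.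
Hence \<open>G\<^sup>-\<^sup>1\<close> maps \<open>W\<^sup>\<circ>\<close> bijectively onto \<open>\<hat>W\<close>, and substituting \<open>\<alpha> = G\<^sup>-\<^sup>1 v\<close> turns the
potential equation into the stated condition on \<open>\<hat>W\<close>.\<close>

lemma fiber_deriv_eqI:
  assumes "\<And>\<beta>. ((\<lambda>t. f q (\<alpha> + t *\<^sub>R \<beta>)) has_real_derivative \<beta> \<bullet> u) (at 0)"
  shows "fiber_deriv f q \<alpha> = u"
  unfolding fiber_deriv_def pairing_def
proof (rule the_equality)
  fix u' assume "\<forall>\<beta>. ((\<lambda>t. f q (\<alpha> + t *\<^sub>R \<beta>)) has_real_derivative \<beta> \<bullet> u') (at 0)"
  then have "\<forall>\<beta>. \<beta> \<bullet> u' = \<beta> \<bullet> u"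
    using assms DERIV_unique by blast
  then show "u' = u" by (simp add: vector_eq_ldot)
qed (use assms in blast)

lemma inner_fiber_deriv_quadratic:
  fixes C :: "real^'n \<Rightarrow> real^'n \<Rightarrow> real"
  assumes C: "bilinear C" and sym: "\<And>x y. C x y = C y x" and f: "\<And>x. f q x = C x x / 2"
  shows "\<beta> \<bullet> fiber_deriv f q \<alpha> = C \<alpha> \<beta>"
proof -
  have lin: "linear (C \<alpha>)" using C by (simp add: bilinear_def)
  have "fiber_deriv f q \<alpha> = adjoint (C \<alpha>) 1"
  proof (rule fiber_deriv_eqI)
    fix \<beta>
    have expand: "f q (\<alpha> + t *\<^sub>R \<beta>) = C \<alpha> \<alpha> / 2 + t * C \<alpha> \<beta> + t\<^sup>2 * (C \<beta> \<beta> / 2)" for t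
      using f[of "\<alpha> + t *\<^sub>R \<beta>"] sym[of \<beta> \<alpha>]
      by (simp add: bilinear_ladd[OF C] bilinear_radd[OF C] bilinear_lmul[OF C]
          bilinear_rmul[OF C] power2_eq_square field_simps)
    have "((\<lambda>t. C \<alpha> \<alpha> / 2 + t * C \<alpha> \<beta> + t\<^sup>2 * (C \<beta> \<beta> / 2)) has_real_derivative C \<alpha> \<beta>) (at 0)"
      by (auto intro!: derivative_eq_intros)
    then show "((\<lambda>t. f q (\<alpha> + t *\<^sub>R \<beta>)) has_real_derivative \<beta> \<bullet> adjoint (C \<alpha>) 1) (at 0)"
      by (simp add: expand adjoint_works[OF lin])
  qed
  then show ?thesis by (simp add: adjoint_works[OF lin])
qed

lemma bij_of_inner_eq_positive_definite:
  fixes G :: "'a::euclidean_space \<Rightarrow> 'a"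
  assumes G: "\<And>\<alpha> \<beta>. \<beta> \<bullet> G \<alpha> = C \<alpha> \<beta>" and C: "bilinear C"
    and pos: "\<And>x. x \<noteq> 0 \<Longrightarrow> C x x > 0"
  shows "bij G"
proof -
  have lin: "linear G"
  proof (rule linearI)
    show "G (x + y) = G x + G y" for x y
      by (simp add: vector_eq_ldot[symmetric] G inner_add_right bilinear_ladd[OF C])
    show "G (r *\<^sub>R x) = r *\<^sub>R G x" for r x
      by (simp add: vector_eq_ldot[symmetric] G bilinear_lmul[OF C])
  qed
  have "G x = 0 \<Longrightarrow> x = 0" for x
    using G[of x x] pos[of x] by force
  then have "inj G" using linear_injective_0[OF lin] by blast
  then show ?thesis using linear_injective_imp_surjective[OF lin] by (simp add: bij_def)
qed

lemma bilinear_compose: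
  assumes "bilinear h" "linear f" "linear g"
  shows "bilinear (\<lambda>x y. h (f x) (g y))"
proof -
  have "linear (\<lambda>y. h (f x) (g y))" for x
    using linear_compose[OF assms(3), of "h (f x)"] assms(1) by (simp add: bilinear_def o_def)
  moreover have "linear (\<lambda>x. h (f x) (g y))" for y
    using linear_compose[OF assms(2), of "\<lambda>z. h z (g y)"] assms(1) by (simp add: bilinear_def o_def)
  ultimately show ?thesis by (simp add: bilinear_def)
qed

lemma bilinear_add:
  assumes "bilinear h" "bilinear k"
  shows "bilinear (\<lambda>x y. h x y + k x y)"
  using assms by (simp add: bilinear_def linear_compose_add)

definition complementary :: "'a::real_vector set \<Rightarrow> 'a set \<Rightarrow> bool" where
  "complementary A B \<longleftrightarrow> subspace A \<and> subspace B \<and> A \<inter> B = {0} \<and> (\<forall>\<alpha>. \<exists>\<sigma>\<in>A. \<exists>\<omega>\<in>B. \<alpha> = \<sigma> + \<omega>)"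

lemma complementary_commute: "complementary A B \<longleftrightarrow> complementary B A"
  unfolding complementary_def by (metis add.commute inf_commute)

lemma complementary_if_is_complement:
  assumes "is_complement Wh W" "subbundle W"
  shows "complementary (Wh q) (W q)"
  using assms by (simp add: is_complement_def subbundle_def complementary_def)

context
  fixes A B :: "'q \<Rightarrow> (real^'n) set" and q :: 'q
  assumes AB: "complementary (A q) (B q)"
begin

lemma proj_along_eqI:
  assumes "\<sigma> \<in> A q" "\<alpha> - \<sigma> \<in> B q"
  shows "proj_along A B q \<alpha> = \<sigma>"
  unfolding proj_along_def
proof (rule the_equality)
  fix \<tau> assume \<tau>: "\<tau> \<in> A q \<and> \<alpha> - \<tau> \<in> B q"
  have "\<tau> - \<sigma> \<in> A q" using AB assms \<tau> subspace_diff unfolding complementary_def by blast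
  moreover have "(\<alpha> - \<sigma>) - (\<alpha> - \<tau>) \<in> B q"
    using AB assms \<tau> subspace_diff unfolding complementary_def by blast
  ultimately have "\<tau> - \<sigma> \<in> A q \<inter> B q" by simp
  then show "\<tau> = \<sigma>" using AB unfolding complementary_def by simp
qed (use assms in simp)

lemma proj_along_mem: "proj_along A B q \<alpha> \<in> A q" and diff_proj_along_mem: "\<alpha> - proj_along A B q \<alpha> \<in> B q"
proof -
  obtain \<sigma> \<omega> where "\<sigma> \<in> A q" "\<omega> \<in> B q" "\<alpha> = \<sigma> + \<omega>"
    using AB unfolding complementary_def by blast
  moreover from this have "proj_along A B q \<alpha> = \<sigma>" by (intro proj_along_eqI) simp_all
  ultimately show "proj_along A B q \<alpha> \<in> A q" "\<alpha> - proj_along A B q \<alpha> \<in> B q" by simp_all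
qed

lemma proj_along_eq_0_iff: "proj_along A B q \<alpha> = 0 \<longleftrightarrow> \<alpha> \<in> B q"
  using AB diff_proj_along_mem[of \<alpha>] proj_along_eqI[of 0 \<alpha>]
  by (auto simp: complementary_def subspace_0)

lemma linear_proj_along: "linear (proj_along A B q)"
proof (rule linearI)
  have sub: "subspace (A q)" "subspace (B q)" using AB by (simp_all add: complementary_def)
  show "proj_along A B q (x + y) = proj_along A B q x + proj_along A B q y" for x y
  proof (rule proj_along_eqI)
    show "proj_along A B q x + proj_along A B q y \<in> A q"
      using sub proj_along_mem subspace_add by blast
    have "(x - proj_along A B q x) + (y - proj_along A B q y) \<in> B q"
      using sub diff_proj_along_mem subspace_add by blast
    then show "x + y - (proj_along A B q x + proj_along A B q y) \<in> B q"
      by (simp add: algebra_simps)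
  qed
  show "proj_along A B q (r *\<^sub>R x) = r *\<^sub>R proj_along A B q x" for r x
  proof (rule proj_along_eqI)
    show "r *\<^sub>R proj_along A B q x \<in> A q" using sub proj_along_mem subspace_mul by blast
    have "r *\<^sub>R (x - proj_along A B q x) \<in> B q" using sub diff_proj_along_mem subspace_mul by blast
    then show "r *\<^sub>R x - r *\<^sub>R proj_along A B q x \<in> B q" by (simp add: algebra_simps)
  qed
qed

end

lemma proj_along_add_proj_along:
  assumes "complementary (A q) (B q)"
  shows "proj_along A B q \<alpha> + proj_along B A q \<alpha> = \<alpha>"
proof -
  have "proj_along B A q \<alpha> = \<alpha> - proj_along A B q \<alpha>"
    using assms by (intro proj_along_eqI) (auto simp: complementary_commute diff_proj_along_mem proj_along_mem)
  then show ?thesis by simp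
qed

lemma ball_inv_bij_iff:
  assumes "bij G" and GS: "\<And>\<alpha>. G \<alpha> \<in> S \<longleftrightarrow> \<alpha> \<in> T" and G': "\<And>\<sigma>. \<sigma> \<in> T \<Longrightarrow> G \<sigma> = G' \<sigma>"
  shows "(\<forall>v\<in>S. P (inv G v) (G (inv G v))) \<longleftrightarrow> (\<forall>\<sigma>\<in>T. P \<sigma> (G' \<sigma>))"
proof
  assume "\<forall>v\<in>S. P (inv G v) (G (inv G v))"
  then show "\<forall>\<sigma>\<in>T. P \<sigma> (G' \<sigma>)"
    using GS G' inv_f_f[OF bij_is_inj[OF assms(1)]] by metis
next
  assume "\<forall>\<sigma>\<in>T. P \<sigma> (G' \<sigma>)"
  then show "\<forall>v\<in>S. P (inv G v) (G (inv G v))"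
    using GS G' bij_inv_eq_iff[OF assms(1)] by metis
qed

lemma nonneg_if_positive_on:
  fixes b :: "'a::real_vector \<Rightarrow> 'a \<Rightarrow> real"
  assumes "bilinear b" "\<forall>\<alpha>\<in>S. \<alpha> \<noteq> 0 \<longrightarrow> b \<alpha> \<alpha> > 0" "x \<in> S"
  shows "b x x \<ge> 0"
  using assms by (cases "x = 0") (auto simp: bilinear_lzero[OF assms(1)] less_imp_le)

locale split_quadratic_fiber =
  fixes A B :: "'q \<Rightarrow> (real^'n) set" and q :: 'q and K L :: "'q \<Rightarrow> real^'n \<Rightarrow> real"
    and bK bL :: "real^'n \<Rightarrow> real^'n \<Rightarrow> real"
  assumes complementary: "complementary (A q) (B q)"
    and bK: "bilinear bK" "\<forall>\<alpha>\<in>A q. \<forall>\<beta>\<in>A q. bK \<alpha> \<beta> = bK \<beta> \<alpha>"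
      "\<forall>\<alpha>\<in>A q. \<alpha> \<noteq> 0 \<longrightarrow> bK \<alpha> \<alpha> > 0" "\<forall>\<alpha>\<in>A q. K q \<alpha> = bK \<alpha> \<alpha> / 2"
    and bL: "bilinear bL" "\<forall>\<alpha>\<in>B q. \<forall>\<beta>\<in>B q. bL \<alpha> \<beta> = bL \<beta> \<alpha>"
      "\<forall>\<alpha>\<in>B q. \<alpha> \<noteq> 0 \<longrightarrow> bL \<alpha> \<alpha> > 0" "\<forall>\<alpha>\<in>B q. L q \<alpha> = bL \<alpha> \<alpha> / 2"
begin

abbreviation "proj_A \<equiv> proj_along A B q"
abbreviation "proj_B \<equiv> proj_along B A q"

definition CK :: "real^'n \<Rightarrow> real^'n \<Rightarrow> real" where
  "CK x y = bK (proj_A x) (proj_A y)"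

definition CL :: "real^'n \<Rightarrow> real^'n \<Rightarrow> real" where
  "CL x y = bL (proj_B x) (proj_B y)"

definition Hh :: "'q \<Rightarrow> real^'n \<Rightarrow> real" where
  "Hh = (\<lambda>q \<alpha>. K q (proj_along A B q \<alpha>) + L q (proj_along B A q \<alpha>))"

lemma complementary_swap: "complementary (B q) (A q)"
  using complementary complementary_commute by blast

lemmas proj_A_mem = proj_along_mem[where A=A and B=B and q=q, OF complementary]
lemmas proj_B_mem = proj_along_mem[where A=B and B=A and q=q, OF complementary_swap]
lemmas proj_A_eq_0_iff = proj_along_eq_0_iff[where A=A and B=B and q=q, OF complementary]
lemmas proj_B_eq_0_iff = proj_along_eq_0_iff[where A=B and B=A and q=q, OF complementary_swap]
lemmas linear_proj_A = linear_proj_along[where A=A and B=B and q=q, OF complementary]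
lemmas linear_proj_B = linear_proj_along[where A=B and B=A and q=q, OF complementary_swap]

lemma bilinear_CK: "bilinear CK"
  unfolding CK_def
  using bilinear_compose[OF bK(1) linear_proj_A linear_proj_A] .

lemma bilinear_CL: "bilinear CL"
  unfolding CL_def
  using bilinear_compose[OF bL(1) linear_proj_B linear_proj_B] .

lemma CK_commute: "CK x y = CK y x"
  unfolding CK_def using bK(2) proj_A_mem by simp

lemma CL_commute: "CL x y = CL y x"
  unfolding CL_def using bL(2) proj_B_mem by simp

lemma CK_nonneg: "CK x x \<ge> 0"
  unfolding CK_def using nonneg_if_positive_on[OF bK(1,3) proj_A_mem] .

lemma CL_nonneg: "CL x x \<ge> 0"
  unfolding CL_def using nonneg_if_positive_on[OF bL(1,3) proj_B_mem] .

lemma CK_eq_0D: "CK x x = 0 \<Longrightarrow> x \<in> B q"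
  unfolding CK_def using bK(3) proj_A_mem proj_A_eq_0_iff by force

lemma CL_eq_0D: "CL x x = 0 \<Longrightarrow> x \<in> A q"
  unfolding CL_def using bL(3) proj_B_mem proj_B_eq_0_iff by force

lemma CK_vanishes: "\<omega> \<in> B q \<Longrightarrow> CK x \<omega> = 0"
  unfolding CK_def by (simp add: proj_A_eq_0_iff[THEN iffD2] bilinear_rzero[OF bK(1)])

lemma CL_vanishes: "\<sigma> \<in> A q \<Longrightarrow> CL \<sigma> y = 0"
  unfolding CL_def by (simp add: proj_B_eq_0_iff[THEN iffD2] bilinear_lzero[OF bL(1)])

lemma inner_fiber_deriv_K: "\<beta> \<bullet> fiber_deriv (\<lambda>q \<alpha>. K q (proj_along A B q \<alpha>)) q \<alpha> = CK \<alpha> \<beta>"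
  using bK(4) proj_A_mem
  by (intro inner_fiber_deriv_quadratic bilinear_CK CK_commute) (simp add: CK_def)

lemma inner_fiber_deriv_L: "\<beta> \<bullet> fiber_deriv (\<lambda>q \<alpha>. L q (proj_along B A q \<alpha>)) q \<alpha> = CL \<alpha> \<beta>"
  using bL(4) proj_B_mem
  by (intro inner_fiber_deriv_quadratic bilinear_CL CL_commute) (simp add: CL_def)

lemma inner_fiber_deriv_Hh: "\<beta> \<bullet> fiber_deriv Hh q \<alpha> = CK \<alpha> \<beta> + CL \<alpha> \<beta>"
proof (rule inner_fiber_deriv_quadratic[OF bilinear_add[OF bilinear_CK bilinear_CL]])
  show "CK x y + CL x y = CK y x + CL y x" for x y
    by (simp add: CK_commute CL_commute)
  show "Hh q x = (CK x x + CL x x) / 2" for x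
    using bK(4) proj_A_mem bL(4) proj_B_mem by (simp add: Hh_def CK_def CL_def)
qed

lemma fiber_deriv_L_eq_0: "\<sigma> \<in> A q \<Longrightarrow> fiber_deriv (\<lambda>q \<alpha>. L q (proj_along B A q \<alpha>)) q \<sigma> = 0"
  by (simp add: vector_eq_ldot[symmetric] inner_fiber_deriv_L CL_vanishes)

lemma fiber_deriv_Hh_eq_K:
  "\<sigma> \<in> A q \<Longrightarrow> fiber_deriv Hh q \<sigma> = fiber_deriv (\<lambda>q \<alpha>. K q (proj_along A B q \<alpha>)) q \<sigma>"
  by (simp add: vector_eq_ldot[symmetric] inner_fiber_deriv_Hh inner_fiber_deriv_K CL_vanishes)

lemma bij_fiber_deriv_Hh: "bij (fiber_deriv Hh q)"
proof (rule bij_of_inner_eq_positive_definite[OF inner_fiber_deriv_Hh bilinear_add[OF bilinear_CK bilinear_CL]])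
  fix x :: "real^'n" assume "x \<noteq> 0"
  then have "CK x x \<noteq> 0 \<or> CL x x \<noteq> 0"
    using CK_eq_0D CL_eq_0D complementary unfolding complementary_def by blast
  then show "CK x x + CL x x > 0" using CK_nonneg[of x] CL_nonneg[of x] by linarith
qed

lemma fiber_deriv_Hh_mem_annihilator_iff: "fiber_deriv Hh q \<alpha> \<in> annihilator (B q) \<longleftrightarrow> \<alpha> \<in> A q"
proof
  assume ann: "fiber_deriv Hh q \<alpha> \<in> annihilator (B q)"
  have "CL \<alpha> \<alpha> = CL \<alpha> (proj_A \<alpha>) + CL \<alpha> (proj_B \<alpha>)"
    using proj_along_add_proj_along[where A=A and B=B and q=q, OF complementary, of \<alpha>] bilinear_radd[OF bilinear_CL] by metis
  also have "\<dots> = proj_B \<alpha> \<bullet> fiber_deriv Hh q \<alpha>"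
    using CL_commute[of \<alpha> "proj_A \<alpha>"] CL_vanishes[OF proj_A_mem]
    by (simp add: inner_fiber_deriv_Hh CK_vanishes[OF proj_B_mem])
  also have "\<dots> = 0"
    using ann proj_B_mem unfolding annihilator_def pairing_def by blast
  finally show "\<alpha> \<in> A q" by (rule CL_eq_0D)
next
  assume "\<alpha> \<in> A q"
  then show "fiber_deriv Hh q \<alpha> \<in> annihilator (B q)"
    by (simp add: annihilator_def pairing_def inner_fiber_deriv_Hh CK_vanishes CL_vanishes)
qed

end

theorem mainTheorem3:
  fixes W Wh :: "'q \<Rightarrow> (real^'n) set"
    and H K L :: "'q \<Rightarrow> real^'n \<Rightarrow> real"
    and dh dhh :: "'q \<Rightarrow> real^'n"
  assumes W: "subbundle W"
    and H: "quadratic_form_on (\<lambda>q. UNIV) H"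
    and Wh: "is_complement Wh W"
    and K: "quadratic_form_on Wh K"
    and L: "quadratic_form_on W L"
  shows "(\<forall>q. \<forall>\<sigma>\<in>Wh q. fiber_deriv (\<lambda>q \<alpha>. L q (proj_along W Wh q \<alpha>)) q \<sigma> = 0) \<and>
    ((\<forall>q. \<forall>v\<in>annihilator (W q).
        let Hh = (\<lambda>q \<alpha>. K q (proj_along Wh W q \<alpha>) + L q (proj_along W Wh q \<alpha>));
            \<alpha> = inv (fiber_deriv Hh q) v
        in pairing (dhh q) (fiber_deriv H q \<alpha>) - pairing (dh q) (fiber_deriv Hh q \<alpha>) = 0)
     \<longleftrightarrow>
     (\<forall>q. \<forall>\<sigma>\<in>Wh q.
        pairing (dhh q) (fiber_deriv H q \<sigma>)
        - pairing (dh q) (fiber_deriv (\<lambda>q \<alpha>. K q (proj_along Wh W q \<alpha>)) q \<sigma>) = 0))"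
proof -
  define Hhat where "Hhat = (\<lambda>q \<alpha>. K q (proj_along Wh W q \<alpha>) + L q (proj_along W Wh q \<alpha>))"
  define FK where "FK = fiber_deriv (\<lambda>q \<alpha>. K q (proj_along Wh W q \<alpha>))"
  have fiberwise: "(\<forall>\<sigma>\<in>Wh q. fiber_deriv (\<lambda>q \<alpha>. L q (proj_along W Wh q \<alpha>)) q \<sigma> = 0)
      \<and> bij (fiber_deriv Hhat q) \<and> (\<forall>\<alpha>. fiber_deriv Hhat q \<alpha> \<in> annihilator (W q) \<longleftrightarrow> \<alpha> \<in> Wh q)
      \<and> (\<forall>\<sigma>\<in>Wh q. fiber_deriv Hhat q \<sigma> = FK q \<sigma>)" for q
  proof -
    obtain bK where "bilinear bK" "\<forall>\<alpha>\<in>Wh q. \<forall>\<beta>\<in>Wh q. bK \<alpha> \<beta> = bK \<beta> \<alpha>"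
      "\<forall>\<alpha>\<in>Wh q. \<alpha> \<noteq> 0 \<longrightarrow> bK \<alpha> \<alpha> > 0" "\<forall>\<alpha>\<in>Wh q. K q \<alpha> = bK \<alpha> \<alpha> / 2"
      using K unfolding quadratic_form_on_def by blast
    moreover obtain bL where "bilinear bL" "\<forall>\<alpha>\<in>W q. \<forall>\<beta>\<in>W q. bL \<alpha> \<beta> = bL \<beta> \<alpha>"
      "\<forall>\<alpha>\<in>W q. \<alpha> \<noteq> 0 \<longrightarrow> bL \<alpha> \<alpha> > 0" "\<forall>\<alpha>\<in>W q. L q \<alpha> = bL \<alpha> \<alpha> / 2"
      using L unfolding quadratic_form_on_def by blast
    ultimately interpret split_quadratic_fiber Wh W q K L bK bL
      using complementary_if_is_complement[OF Wh W] by unfold_locales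
    have "split_quadratic_fiber.Hh Wh W K L = Hhat"
      by (simp add: Hh_def Hhat_def)
    then show ?thesis
      using fiber_deriv_L_eq_0 bij_fiber_deriv_Hh fiber_deriv_Hh_mem_annihilator_iff fiber_deriv_Hh_eq_K
      unfolding FK_def by simp
  qed
  have "(\<forall>v\<in>annihilator (W q). pairing (dhh q) (fiber_deriv H q (inv (fiber_deriv Hhat q) v))
          - pairing (dh q) (fiber_deriv Hhat q (inv (fiber_deriv Hhat q) v)) = 0)
      \<longleftrightarrow> (\<forall>\<sigma>\<in>Wh q. pairing (dhh q) (fiber_deriv H q \<sigma>) - pairing (dh q) (FK q \<sigma>) = 0)" for q
    using fiberwise[of q] by (intro ball_inv_bij_iff) simp_all
  with fiberwise show ?thesis
    unfolding Hhat_def FK_def Let_def by simp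
qed

end
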